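(* Let $F$ be a MIMO LTI system with $m$ inputs and $p$ outputs and $\|F\|_2<\infty$; let $k_1,\dots,k_m>0$, $K=\mathrm{diag}(k_1,\dots,k_m)$, $\epsilon,\delta>0$. For every stable $m\times m$ LTI system $G$ and every LTI system $L$ with $L(z)G(z)=I_m$, $$\kappa_{\delta,\epsilon}^2\,\|GK\|_2^2\,\|FL\|_2^2\ \ge\ \kappa_{\delta,\epsilon}^2\Big(\frac1{2\pi}\int_{-\pi}^{\pi}\|F(e^{j\omega})K\|_*\,d\omega\Big)^2,$$ where $\|M\|_*$ denotes the nuclear norm (sum of singular values) of a matrix $M$.
   Context: All systems are causal LTI with real coefficients; $\|\cdot\|_2$ for a system is the $\mathcal H_2$ norm, $\|G\|_2^2=\frac1{2\pi}\int_{-\pi}^{\pi}\mathrm{Tr}(G(e^{j\omega})^*G(e^{j\omega}))d\omega$. For $\epsilon,\delta>0$, $\mathcal Q(x)=\frac1{\sqrt{2\pi}}\int_x^\infty e^{-s^2/2}ds$, $K_\delta=\mathcal Q^{-1}(\delta)$, $\kappa_{\delta,\epsilon}=\frac1{2\epsilon}(K_\delta+\sqrt{K_\delta^2+2\epsilon})$. (The left-hand side is a lower bound on the mean-squared error of any zero-forcing mechanism $FL(Gu+w)$ whose noise variance is calibrated to the sensitivity of $G$, since that sensitivity is at least $\|GK\|_2$.) *)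

theory Defs
  imports "HOL-Analysis.Analysis"
begin

definition Qfun :: "real \<Rightarrow> real" where
  "Qfun x = (1 / sqrt (2 * pi)) * (LBINT s:{x..}. exp (- (s\<^sup>2) / 2))"

definition K_delta :: "real \<Rightarrow> real" where
  "K_delta \<delta> = inv Qfun \<delta>"

definition kappa :: "real \<Rightarrow> real \<Rightarrow> real" where
  "kappa \<delta> \<epsilon> = (1 / (2 * \<epsilon>)) * (K_delta \<delta> + sqrt ((K_delta \<delta>)\<^sup>2 + 2 * \<epsilon>))"

definition adj :: "complex^'n^'m \<Rightarrow> complex^'m^'n" where
  "adj M = (\<chi> i j. cnj (M $ j $ i))"

definition psd :: "complex^'n^'n \<Rightarrow> bool" where
  "psd S \<longleftrightarrow> adj S = S \<and> (\<forall>x. 0 \<le> Re (\<Sum>i\<in>UNIV. cnj (x $ i) * (S *v x) $ i))"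

text \<open>Nuclear norm: trace of the PSD square root of M^* M, i.e. the sum of the
  singular values of M.\<close>
definition nuclear_norm :: "complex^'n^'m \<Rightarrow> real" where
  "nuclear_norm M = Re (trace (THE S. psd S \<and> S ** S = adj M ** M))"

definition diagm :: "real^'m \<Rightarrow> complex^'m^'m" where
  "diagm k = (\<chi> i j. if i = j then complex_of_real (k $ i) else 0)"

text \<open>An LTI system is represented by its frequency response
  \<omega> \<mapsto> G(e^{j\<omega>}).  Squared H2 norm (possibly infinite).\<close>
definition h2sq :: "(real \<Rightarrow> complex^'n^'m) \<Rightarrow> ennreal" where
  "h2sq G = ennreal (1 / (2 * pi)) *
     (\<integral>\<^sup>+ \<omega>\<in>{-pi..pi}. ennreal (Re (trace (adj (G \<omega>) ** G \<omega>))) \<partial>lborel)"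

end

theory Submission
  imports Defs
begin

(* Write K = diagm k.  Wherever L G = I on [-pi, pi] we have F K = (F L) (G K), and for
   arbitrary matrices the nuclear norm obeys the Hoelder-type bound
     ||A B||_nuc <= ||A||_F ||B||_F.
   Integrating this pointwise bound and applying the Cauchy-Schwarz inequality in L2 gives
     (int ||F K||_nuc)^2 <= (int ||F L||_F^2) (int ||G K||_F^2),
   which after normalisation by 1/(2 pi) and multiplication by kappa^2 is the theorem. *)


section \<open>The standard inner product on complex vectors\<close>

definition cinner :: "complex^'n \<Rightarrow> complex^'n \<Rightarrow> complex" where
  "cinner x y = (\<Sum>i\<in>UNIV. cnj (x$i) * y$i)"

lemma cinner_add_right: "cinner x (y + z) = cinner x y + cinner x z"
  by (simp add: cinner_def distrib_left sum.distrib)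

lemma cinner_add_left: "cinner (x + y) z = cinner x z + cinner y z"
  by (simp add: cinner_def distrib_right sum.distrib)

lemma cinner_diff_right: "cinner x (y - z) = cinner x y - cinner x z"
  by (simp add: cinner_def right_diff_distrib sum_subtractf)

lemma cinner_diff_left: "cinner (x - y) z = cinner x z - cinner y z"
  by (simp add: cinner_def left_diff_distrib sum_subtractf)

lemma cinner_scale_right: "cinner x (c *s y) = c * cinner x y"
  by (simp add: cinner_def sum_distrib_left algebra_simps)

lemma cinner_scale_left: "cinner (c *s x) y = cnj c * cinner x y"
  by (simp add: cinner_def sum_distrib_left algebra_simps)

lemma cinner_zero_right [simp]: "cinner x 0 = 0"
  by (simp add: cinner_def)

lemma cinner_zero_left [simp]: "cinner 0 x = 0"
  by (simp add: cinner_def)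

lemma cinner_sum_right: "cinner x (\<Sum>v\<in>V. f v) = (\<Sum>v\<in>V. cinner x (f v))"
  by (induct V rule: infinite_finite_induct) (auto simp: cinner_add_right)

lemma cinner_sum_left: "cinner (\<Sum>v\<in>V. f v) x = (\<Sum>v\<in>V. cinner (f v) x)"
  by (induct V rule: infinite_finite_induct) (auto simp: cinner_add_left)

lemma cinner_commute: "cinner y x = cnj (cinner x y)"
  by (simp add: cinner_def mult.commute)

lemma cmod_cinner_commute: "cmod (cinner x y) = cmod (cinner y x)"
  using cinner_commute[of x y] by simp

lemma inner_cinner: "inner x y = Re (cinner x y)"
  by (simp add: cinner_def inner_vec_def inner_complex_def)

lemma cnj_mult_self: "cnj z * z = complex_of_real ((cmod z)\<^sup>2)"
  using complex_norm_square[of z] by (simp add: mult.commute)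

lemma norm_sq_sum: "(norm (x::complex^'n))\<^sup>2 = (\<Sum>i\<in>UNIV. (cmod (x$i))\<^sup>2)"
  by (simp add: norm_vec_def L2_set_def sum_nonneg)

lemma cinner_self: "cinner x x = complex_of_real ((norm x)\<^sup>2)"
  unfolding cinner_def norm_sq_sum by (simp add: cnj_mult_self)

lemma Re_cinner_self: "Re (cinner x x) = (norm x)\<^sup>2"
  by (simp add: cinner_self)

lemma cinner_mult_swap: "cinner v x * cinner x v = complex_of_real ((cmod (cinner v x))\<^sup>2)"
  using cnj_mult_self[of "cinner v x"] cinner_commute[of v x] by (simp add: mult.commute)

lemma cinner_adj: "cinner x (A *v y) = cinner (adj A *v x) y"
proof -
  have "cinner x (A *v y) = (\<Sum>i\<in>UNIV. \<Sum>j\<in>UNIV. cnj (x$i) * A$i$j * y$j)"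
    unfolding cinner_def matrix_vector_mult_def by (simp add: sum_distrib_left mult.assoc)
  also have "\<dots> = (\<Sum>j\<in>UNIV. \<Sum>i\<in>UNIV. cnj (x$i) * A$i$j * y$j)" by (rule sum.swap)
  also have "\<dots> = cinner (adj A *v x) y"
    unfolding cinner_def matrix_vector_mult_def adj_def
    by (simp add: sum_distrib_left sum_distrib_right mult_ac)
  finally show ?thesis .
qed

lemma adj_adj [simp]: "adj (adj A) = A"
  by (simp add: adj_def vec_eq_iff)

lemma adj_mult: "adj (A ** B) = adj B ** adj A"
  by (simp add: adj_def matrix_matrix_mult_def vec_eq_iff mult.commute)

lemma mat_vector_mult: "mat c *v x = c *s (x :: 'a::semiring_1^'n)"
  by (simp add: vec_eq_iff matrix_vector_mult_def mat_def if_distrib if_distribR cong: if_cong)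

lemma mv_scale: "(A::complex^'n^'m) *v (c *s x) = c *s (A *v x)"
  unfolding matrix_vector_mult_def vec_eq_iff
  by (auto simp: sum_distrib_left mult.left_commute intro!: sum.cong)

lemma mv_sum: "A *v (\<Sum>v\<in>V. f v) = (\<Sum>v\<in>V. A *v f v)"
  by (induct V rule: infinite_finite_induct) (auto simp: matrix_vector_right_distrib)

lemma scale_sum: "(c::complex) *s (\<Sum>v\<in>V. f v) = (\<Sum>v\<in>V. c *s f v)"
  unfolding vec_eq_iff by (auto simp: sum_distrib_left intro!: sum.cong)

lemma psd_cinner: "psd S \<longleftrightarrow> adj S = S \<and> (\<forall>x. 0 \<le> Re (cinner x (S *v x)))"
  by (simp add: psd_def cinner_def)


section \<open>Orthonormal sets and bases\<close>

definition orthonormal :: "(complex^'n) set \<Rightarrow> bool" where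
  "orthonormal V \<longleftrightarrow> finite V \<and> (\<forall>v\<in>V. cinner v v = 1)
     \<and> (\<forall>v\<in>V. \<forall>w\<in>V. v \<noteq> w \<longrightarrow> cinner v w = 0)"

definition onb :: "(complex^'n) set \<Rightarrow> bool" where
  "onb V \<longleftrightarrow> orthonormal V \<and> (\<forall>x. x = (\<Sum>v\<in>V. cinner v x *s v))"

lemma onb_expansion: "onb V \<Longrightarrow> x = (\<Sum>v\<in>V. cinner v x *s v)"
  by (simp add: onb_def)

text \<open>Orthonormal sets are linearly independent over the reals, hence bounded in size;
  this bounds the search for a maximal orthonormal eigenvector set.\<close>
lemma orthonormal_card:
  fixes V :: "(complex^'n) set" assumes "orthonormal V" shows "card V \<le> DIM(complex^'n)"
proof -
  have "pairwise orthogonal V"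
    using assms by (auto simp: orthonormal_def pairwise_def orthogonal_def inner_cinner)
  moreover have "(0::complex^'n) \<notin> V" using assms by (auto simp: orthonormal_def cinner_def)
  ultimately have "independent V" by (rule pairwise_orthogonal_independent)
  thus ?thesis using independent_bound by blast
qed

lemma orthonormal_coeff:
  assumes "orthonormal V" "w \<in> V"
  shows "cinner w (\<Sum>v\<in>V. c v *s v) = c w"
proof -
  have "cinner w (\<Sum>v\<in>V. c v *s v) = (\<Sum>v\<in>V. if v = w then c v else 0)"
    unfolding cinner_sum_right cinner_scale_right
    using assms by (intro sum.cong) (auto simp: orthonormal_def)
  also have "\<dots> = c w" using assms by (simp add: orthonormal_def)
  finally show ?thesis .
qed

lemma onb_mv_expand: "onb V \<Longrightarrow> (A::complex^'n^'m) *v x = (\<Sum>v\<in>V. cinner v x *s (A *v v))"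
  by (subst onb_expansion[of V x]) (simp_all add: mv_sum mv_scale)

lemma onb_matrix_eq:
  assumes "onb V" "\<And>v. v \<in> V \<Longrightarrow> (A::complex^'n^'m) *v v = B *v v"
  shows "A = B"
proof -
  have "A *v x = B *v x" for x
    using onb_mv_expand[OF assms(1), of A x] onb_mv_expand[OF assms(1), of B x] assms(2)
    by (simp cong: sum.cong)
  thus ?thesis by (simp add: matrix_eq)
qed

lemma parseval:
  assumes "onb V"
  shows "(norm x)\<^sup>2 = (\<Sum>v\<in>V. (cmod (cinner v x))\<^sup>2)"
proof -
  have "cinner x x = cinner x (\<Sum>v\<in>V. cinner v x *s v)"
    using onb_expansion[OF assms, of x] by simp
  also have "\<dots> = (\<Sum>v\<in>V. complex_of_real ((cmod (cinner v x))\<^sup>2))"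
    by (simp add: cinner_sum_right cinner_scale_right cinner_mult_swap)
  finally have "complex_of_real ((norm x)\<^sup>2) = complex_of_real (\<Sum>v\<in>V. (cmod (cinner v x))\<^sup>2)"
    by (simp only: cinner_self of_real_sum)
  thus ?thesis by (simp only: of_real_eq_iff)
qed

lemma bessel:
  assumes fin: "finite V"
    and orth: "\<And>a b. a \<in> V \<Longrightarrow> b \<in> V \<Longrightarrow> a \<noteq> b \<Longrightarrow> cinner (w a) (w b) = 0"
    and unit: "\<And>a. a \<in> V \<Longrightarrow> w a = 0 \<or> cinner (w a) (w a) = 1"
  shows "(\<Sum>a\<in>V. (cmod (cinner (w a) x))\<^sup>2) \<le> (norm x)\<^sup>2"
proof -
  define d where "d a = cinner (w a) x" for a
  define p where "p = (\<Sum>a\<in>V. d a *s w a)"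
  define N where "N = (\<Sum>a\<in>V. (cmod (d a))\<^sup>2)"
  have wp: "cinner (w b) p = d b" if b: "b \<in> V" for b
  proof -
    have "cinner (w b) p = (\<Sum>a\<in>V. if a = b then d b * cinner (w b) (w b) else 0)"
      unfolding p_def cinner_sum_right cinner_scale_right
      by (rule sum.cong[OF refl]) (use orth b in auto)
    also have "\<dots> = d b" using fin b unit[OF b] by (auto simp: d_def cinner_def)
    finally show ?thesis .
  qed
  have "cinner p p = (\<Sum>a\<in>V. cnj (d a) * cinner (w a) p)"
    by (simp only: p_def cinner_sum_left cinner_scale_left)
  hence pp: "cinner p p = complex_of_real N"
    by (simp add: N_def wp cnj_mult_self)
  have px: "cinner p x = complex_of_real N"
    by (simp add: p_def N_def cinner_sum_left cinner_scale_left cnj_mult_self flip: d_def)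
  have xp: "cinner x p = complex_of_real N" using px cinner_commute[of x p] by simp
  have "cinner (x - p) (x - p) = cinner x x - complex_of_real N"
    by (simp add: cinner_diff_left cinner_diff_right pp px xp)
  hence "(norm (x - p))\<^sup>2 = (norm x)\<^sup>2 - N"
    using Re_cinner_self[of "x - p"] Re_cinner_self[of x] by simp
  hence "0 \<le> (norm x)\<^sup>2 - N" by (metis zero_le_power2)
  thus ?thesis by (simp add: N_def d_def)
qed

lemma onb_trace:
  fixes T :: "complex^'n^'n"
  assumes V: "onb V"
  shows "trace T = (\<Sum>v\<in>V. cinner v (T *v v))"
proof -
  have delta: "(\<Sum>v\<in>V. cnj (v$i) * v$j) = (if j = i then 1 else 0)" for i j
  proof -
    have "axis i (1::complex) $ j = (\<Sum>v\<in>V. cinner v (axis i 1) *s v) $ j"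
      using onb_expansion[OF V, of "axis i 1"] by simp
    moreover have "cinner v (axis i 1) = cnj (v$i)" for v :: "complex^'n"
      unfolding cinner_def axis_def by (simp add: if_distrib if_distribR cong: if_cong)
    ultimately show ?thesis by (simp add: axis_def)
  qed
  have "(\<Sum>v\<in>V. cinner v (T *v v)) = (\<Sum>v\<in>V. \<Sum>i\<in>UNIV. \<Sum>j\<in>UNIV. T$i$j * (cnj (v$i) * v$j))"
    unfolding cinner_def matrix_vector_mult_def by (simp add: sum_distrib_left mult_ac)
  also have "\<dots> = (\<Sum>i\<in>UNIV. \<Sum>j\<in>UNIV. \<Sum>v\<in>V. T$i$j * (cnj (v$i) * v$j))"
    by (subst sum.swap) (rule sum.cong[OF refl], rule sum.swap)
  also have "\<dots> = (\<Sum>i\<in>UNIV. \<Sum>j\<in>UNIV. if i = j then T$i$i else 0)"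
    by (simp add: sum_distrib_left[symmetric] delta if_distrib cong: if_cong)
  also have "\<dots> = trace T" by (simp add: trace_def)
  finally show ?thesis ..
qed


section \<open>The spectral theorem for Hermitian matrices\<close>

lemma quadratic_negative:
  fixes a b :: real
  assumes "b \<ge> 0" "a > 0" and t: "t = - a / (b + 1)"
  shows "2 * t * a + t\<^sup>2 * b < 0"
proof -
  have "t < 0" using assms by simp
  have "b / (b + 1) \<le> 1" using assms by simp
  hence "a * (b / (b + 1)) \<le> a * 1" using assms by (intro mult_left_mono) auto
  moreover have "t * b = - (a * (b / (b + 1)))" using t by simp
  ultimately have "2 * a + t * b > 0" using assms by linarith
  hence "t * (2 * a + t * b) < 0" using \<open>t < 0\<close> by (simp add: mult_neg_pos)
  thus ?thesis by (simp add: algebra_simps power2_eq_square)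
qed

text \<open>A Hermitian matrix whose form is nonnegative on an invariant subspace W annihilates
  every vector of W at which the form vanishes (perturb u in the direction T u).\<close>
lemma hermitian_form_zero_kernel:
  fixes T :: "complex^'n^'n"
  assumes herm: "adj T = T"
    and W_add: "\<And>x y. x \<in> W \<Longrightarrow> y \<in> W \<Longrightarrow> x + y \<in> W"
    and W_scale: "\<And>c x. x \<in> W \<Longrightarrow> c *s x \<in> W"
    and W_inv: "\<And>x. x \<in> W \<Longrightarrow> T *v x \<in> W"
    and nonneg: "\<And>z. z \<in> W \<Longrightarrow> 0 \<le> Re (cinner z (T *v z))"
    and u: "u \<in> W" and u_zero: "Re (cinner u (T *v u)) = 0"
  shows "T *v u = 0"
proof (rule ccontr)
  define d where "d = T *v u"
  assume "T *v u \<noteq> 0"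
  define a where "a = (norm d)\<^sup>2"
  define b where "b = Re (cinner d (T *v d))"
  define t where "t = - a / (b + 1)"
  have "a > 0" using \<open>T *v u \<noteq> 0\<close> by (simp add: a_def d_def)
  have "b \<ge> 0" unfolding b_def d_def using nonneg W_inv u by blast
  have "cinner u (T *v d) = cinner d d" using cinner_adj[of u T d] herm by (simp add: d_def)
  hence "cinner (u + complex_of_real t *s d) (T *v (u + complex_of_real t *s d))
      = cinner u (T *v u) + complex_of_real (2 * t) * cinner d d
        + complex_of_real (t\<^sup>2) * cinner d (T *v d)"
    by (simp add: mv_scale cinner_add_left cinner_add_right
        cinner_scale_left cinner_scale_right power2_eq_square algebra_simps flip: d_def)
  hence "Re (cinner (u + complex_of_real t *s d) (T *v (u + complex_of_real t *s d)))
      = 2 * t * a + t\<^sup>2 * b"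
    using u_zero by (simp add: a_def b_def cinner_self)
  moreover have "u + complex_of_real t *s d \<in> W" using u W_add W_scale W_inv d_def by blast
  ultimately have "0 \<le> 2 * t * a + t\<^sup>2 * b" using nonneg by metis
  thus False using quadratic_negative[OF \<open>b \<ge> 0\<close> \<open>a > 0\<close> t_def] by simp
qed

text \<open>If the orthogonal complement of V is invariant under the Hermitian matrix H and
  nonzero, it contains a unit eigenvector of H with a real eigenvalue: a maximiser of the
  Rayleigh quotient on the complement.\<close>
lemma eigenvector_in_complement:
  fixes H :: "complex^'n^'n"
  assumes herm: "adj H = H"
    and inv: "\<And>v x. v \<in> V \<Longrightarrow> cinner v x = 0 \<Longrightarrow> cinner v (H *v x) = 0"
    and y: "\<forall>v\<in>V. cinner v y = 0" "y \<noteq> 0"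
  shows "\<exists>u l. (\<forall>v\<in>V. cinner v u = 0) \<and> cinner u u = 1 \<and> H *v u = complex_of_real l *s u"
proof -
  define W where "W = {x::complex^'n. \<forall>v\<in>V. cinner v x = 0}"
  define q where "q x = Re (cinner x (H *v x))" for x
  have W_add: "x + z \<in> W" if "x \<in> W" "z \<in> W" for x z
    using that by (auto simp: W_def cinner_add_right)
  have W_scale: "c *s x \<in> W" if "x \<in> W" for x c using that by (auto simp: W_def cinner_scale_right)
  have W_inv: "H *v x \<in> W" if "x \<in> W" for x using that inv by (auto simp: W_def)
  have "closed {x::complex^'n. cinner v x = 0}" for v
    unfolding cinner_def by (intro closed_Collect_eq) (simp_all, intro continuous_intros)
  hence "closed W" unfolding W_def Collect_ball_eq by (simp add: closed_INT)
  hence compact: "compact (W \<inter> sphere 0 1)" by (intro closed_Int_compact) auto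
  have norm_scale: "norm (complex_of_real r *s x) = \<bar>r\<bar> * norm x" for r x
  proof -
    have "complex_of_real r *s x = scaleR r x" unfolding vec_eq_iff by (simp add: scaleR_conv_of_real[where 'a = complex])
    thus ?thesis by simp
  qed
  have q_scale: "q (complex_of_real r *s x) = r\<^sup>2 * q x" for r x
    by (simp add: q_def mv_scale cinner_scale_left cinner_scale_right power2_eq_square)
  have "complex_of_real (1 / norm y) *s y \<in> W \<inter> sphere 0 1"
    using y W_scale norm_scale[of "1 / norm y" y] by (auto simp: W_def)
  hence "W \<inter> sphere 0 1 \<noteq> {}" by auto
  moreover have "continuous_on (W \<inter> sphere 0 1) q"
    unfolding q_def cinner_def matrix_vector_mult_def by (simp, intro continuous_intros)
  ultimately obtain u where uK: "u \<in> W \<inter> sphere 0 1"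
    and umax: "\<And>z. z \<in> W \<inter> sphere 0 1 \<Longrightarrow> q z \<le> q u"
    using continuous_attains_sup[OF compact] by blast
  have q_le: "q z \<le> q u * (norm z)\<^sup>2" if "z \<in> W" for z
  proof (cases "z = 0")
    case True thus ?thesis by (simp add: q_def cinner_def)
  next
    case False
    have "complex_of_real (1 / norm z) *s z \<in> W \<inter> sphere 0 1"
      using that False W_scale norm_scale[of "1 / norm z" z] by auto
    hence "(1 / norm z)\<^sup>2 * q z \<le> q u" using umax q_scale by metis
    thus ?thesis using False by (simp add: field_simps)
  qed
  define T where "T = mat (complex_of_real (q u)) - H"
  have T_herm: "adj T = T" using herm by (simp add: T_def adj_def vec_eq_iff mat_def)
  have T_form: "Re (cinner z (T *v z)) = q u * (norm z)\<^sup>2 - q z" for z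
    by (simp add: T_def matrix_vector_mult_diff_rdistrib mat_vector_mult cinner_diff_right
        cinner_scale_right cinner_self q_def)
  have "T *v u = 0"
  proof (rule hermitian_form_zero_kernel[OF T_herm W_add W_scale])
    show "T *v x \<in> W" if "x \<in> W" for x
      using that W_scale W_inv by (auto simp: W_def T_def matrix_vector_mult_diff_rdistrib
          mat_vector_mult cinner_diff_right cinner_scale_right)
    show "0 \<le> Re (cinner z (T *v z))" if "z \<in> W" for z using T_form q_le[OF that] by simp
    show "u \<in> W" "Re (cinner u (T *v u)) = 0" using uK T_form[of u] by auto
  qed
  hence "H *v u = complex_of_real (q u) *s u"
    by (simp add: T_def matrix_vector_mult_diff_rdistrib mat_vector_mult)
  thus ?thesis using uK by (auto simp: W_def cinner_self)
qed

text \<open>Take a maximal orthonormal set of eigenvectors; its orthogonal complement is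
  invariant, so by the previous lemma it must be trivial.\<close>
lemma hermitian_eigenbasis:
  fixes H :: "complex^'n^'n" assumes herm: "adj H = H"
  shows "\<exists>V lam. onb V \<and> (\<forall>v\<in>V. H *v v = complex_of_real (lam v) *s v)"
proof -
  define P where "P V \<longleftrightarrow> orthonormal V \<and> (\<forall>v\<in>V. \<exists>l::real. H *v v = complex_of_real l *s v)"
    for V :: "(complex^'n) set"
  define C where "C = card ` {V. P V}"
  have "C \<subseteq> {..DIM(complex^'n)}" using orthonormal_card by (auto simp: C_def P_def)
  hence finC: "finite C" by (rule finite_subset) simp
  have "P {}" by (simp add: P_def orthonormal_def)
  hence "Max C \<in> C" using finC by (intro Max_in) (auto simp: C_def)
  then obtain V where PV: "P V" and cV: "card V = Max C" by (auto simp: C_def)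
  have onV: "orthonormal V" using PV by (simp add: P_def)
  have complement_trivial: "x = 0" if x: "\<forall>v\<in>V. cinner v x = 0" for x
  proof (rule ccontr)
    assume "x \<noteq> 0"
    have inv: "cinner v (H *v z) = 0" if "v \<in> V" "cinner v z = 0" for v z
    proof -
      obtain l where l: "H *v v = complex_of_real l *s v" using PV \<open>v \<in> V\<close> by (auto simp: P_def)
      have "cinner v (H *v z) = cinner (H *v v) z" using cinner_adj[of v H z] herm by simp
      thus ?thesis using that by (simp add: l cinner_scale_left)
    qed
    obtain u l where u: "\<forall>v\<in>V. cinner v u = 0" "cinner u u = 1" "H *v u = complex_of_real l *s u"
      using eigenvector_in_complement[OF herm inv x \<open>x \<noteq> 0\<close>] by blast
    have uV: "u \<notin> V" using u by auto
    have "\<forall>v\<in>V. cinner u v = 0" using u(1) by (metis cinner_commute complex_cnj_zero)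
    hence "P (insert u V)" using PV u uV unfolding P_def orthonormal_def by auto
    hence "card (insert u V) \<le> Max C" using finC by (auto simp: C_def)
    moreover have "card (insert u V) = Suc (card V)" using uV onV by (simp add: orthonormal_def)
    ultimately show False using cV by simp
  qed
  have "onb V"
  proof -
    have "x = (\<Sum>v\<in>V. cinner v x *s v)" for x
      using complement_trivial[of "x - (\<Sum>v\<in>V. cinner v x *s v)"]
      by (simp add: cinner_diff_right orthonormal_coeff[OF onV])
    thus ?thesis using onV by (simp add: onb_def)
  qed
  moreover obtain lam where "\<forall>v\<in>V. H *v v = complex_of_real (lam v) *s v"
    using PV unfolding P_def by metis
  ultimately show ?thesis by blast
qed


section \<open>Positive semidefinite square roots and the nuclear norm\<close>

text \<open>A PSD square root T of H acts on each eigenvector of H by the square root of the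
  eigenvalue; this forces uniqueness of PSD square roots.\<close>
lemma psd_sqrt_eigenvector:
  fixes T H :: "complex^'n^'n"
  assumes T: "psd T" and TT: "T ** T = H" and v: "H *v v = complex_of_real l *s v"
  shows "T *v v = complex_of_real (sqrt l) *s v"
proof -
  obtain W mu where W: "onb W" and mu: "\<forall>w\<in>W. T *v w = complex_of_real (mu w) *s w"
    using hermitian_eigenbasis[of T] T by (auto simp: psd_cinner)
  have onW: "orthonormal W" using W by (simp add: onb_def)
  define c where "c w = cinner w v" for w
  have mu_nonneg: "mu w \<ge> 0" if w: "w \<in> W" for w
  proof -
    have "cinner w (T *v w) = complex_of_real (mu w)"
      using mu onW w by (simp add: cinner_scale_right orthonormal_def)
    thus ?thesis using T by (metis psd_cinner Re_complex_of_real)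
  qed
  have Tv: "T *v v = (\<Sum>w\<in>W. (c w * complex_of_real (mu w)) *s w)"
    using onb_mv_expand[OF W, of T v] by (simp add: c_def mu)
  have TTv: "T *v (T *v v) = (\<Sum>w\<in>W. (c w * complex_of_real (mu w) * complex_of_real (mu w)) *s w)"
    unfolding Tv by (simp add: mv_sum mv_scale mu)
  have coeff: "c w * complex_of_real (mu w * mu w) = c w * complex_of_real l" if w: "w \<in> W" for w
  proof -
    have "c w * complex_of_real (mu w) * complex_of_real (mu w) = cinner w (T *v (T *v v))"
      unfolding TTv by (rule orthonormal_coeff[OF onW w, symmetric])
    also have "\<dots> = complex_of_real l * c w"
      using TT v by (simp add: matrix_vector_mul_assoc cinner_scale_right c_def)
    finally show ?thesis by (simp add: mult_ac)
  qed
  have key: "c w * complex_of_real (mu w) = c w * complex_of_real (sqrt l)" if "w \<in> W" for w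
  proof (cases "c w = 0")
    case False
    hence "mu w * mu w = l" using coeff[OF that] by (simp del: of_real_mult)
    hence "sqrt l = mu w" using mu_nonneg[OF that] by auto
    thus ?thesis by simp
  qed simp
  have "T *v v = complex_of_real (sqrt l) *s (\<Sum>w\<in>W. c w *s w)"
    unfolding Tv scale_sum vector_smult_assoc by (rule sum.cong) (simp_all add: key mult.commute)
  thus ?thesis using onb_expansion[OF W, of v] by (simp add: c_def)
qed

text \<open>A matrix with an orthonormal eigenbasis and nonnegative eigenvalues has a PSD
  square root (act on each eigenvector by the square root of its eigenvalue).\<close>
lemma eigenbasis_psd_sqrt:
  fixes H :: "complex^'n^'n"
  assumes V: "onb V" and lam: "\<forall>v\<in>V. H *v v = complex_of_real (lam v) *s v"
    and lam_nonneg: "\<forall>v\<in>V. lam v \<ge> 0"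
  shows "\<exists>S. psd S \<and> S ** S = H"
proof -
  have onV: "orthonormal V" using V by (simp add: onb_def)
  define s where "s v = complex_of_real (sqrt (lam v))" for v
  define S :: "complex^'n^'n" where "S = (\<chi> i j. \<Sum>v\<in>V. s v * v$i * cnj (v$j))"
  have Sx: "S *v x = (\<Sum>v\<in>V. (s v * cinner v x) *s v)" for x
    unfolding S_def vec_eq_iff matrix_vector_mult_def cinner_def
    by (simp add: sum_distrib_left sum_distrib_right mult_ac sum.swap[of _ UNIV V])
  have herm: "adj S = S"
    unfolding S_def adj_def vec_eq_iff by (simp add: s_def mult.commute mult.left_commute)
  have "cinner x (S *v x) = (\<Sum>v\<in>V. complex_of_real (sqrt (lam v) * (cmod (cinner v x))\<^sup>2))" for x
    by (simp add: Sx cinner_sum_right cinner_scale_right s_def mult.assoc cinner_mult_swap)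
  hence "0 \<le> Re (cinner x (S *v x))" for x using lam_nonneg by (simp add: sum_nonneg)
  hence "psd S" using herm by (simp add: psd_cinner)
  moreover have "S ** S = H"
  proof (rule onb_matrix_eq[OF V])
    fix v assume v: "v \<in> V"
    have "S *v v = (\<Sum>w\<in>V. (if w = v then s w else 0) *s w)"
      unfolding Sx using onV v by (intro sum.cong refl) (auto simp: orthonormal_def)
    also have "\<dots> = s v *s v"
      using onV v by (simp add: if_distrib[of "\<lambda>c. c *s _"] orthonormal_def cong: if_cong)
    finally have Sv: "S *v v = s v *s v" .
    have "(S ** S) *v v = (s v * s v) *s v"
      by (simp add: Sv mv_scale flip: matrix_vector_mul_assoc)
    also have "s v * s v = complex_of_real (lam v)"
      using lam_nonneg v by (simp add: s_def flip: of_real_mult)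
    finally show "(S ** S) *v v = H *v v" using lam v by simp
  qed
  ultimately show ?thesis by blast
qed

lemma gram_eigenvalue:
  assumes "(adj M ** M) *v v = complex_of_real l *s v" "cinner v v = 1"
  shows "l = (norm (M *v v))\<^sup>2"
proof -
  have "complex_of_real l = cinner v ((adj M ** M) *v v)"
    using assms by (simp add: cinner_scale_right)
  also have "\<dots> = cinner (M *v v) (M *v v)"
    using cinner_adj[of v "adj M" "M *v v"] by (simp add: matrix_vector_mul_assoc)
  finally show ?thesis by (metis Re_complex_of_real Re_cinner_self)
qed

lemma gram_eigenbasis:
  fixes M :: "complex^'n^'m"
  shows "\<exists>V lam. onb V \<and> (\<forall>v\<in>V. (adj M ** M) *v v = complex_of_real (lam v) *s v)"
  by (rule hermitian_eigenbasis) (simp add: adj_mult)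

text \<open>The Gram matrix has a unique PSD square root, so the description in nuclear_norm is
  meaningful.\<close>
lemma gram_psd_sqrt_unique:
  fixes M :: "complex^'n^'m"
  shows "\<exists>!S. psd S \<and> S ** S = adj M ** M"
proof -
  obtain V lam where V: "onb V" and lam: "\<forall>v\<in>V. (adj M ** M) *v v = complex_of_real (lam v) *s v"
    using gram_eigenbasis by blast
  have lam_sq: "lam v = (norm (M *v v))\<^sup>2" if "v \<in> V" for v
    by (rule gram_eigenvalue) (use lam V that in \<open>auto simp: onb_def orthonormal_def\<close>)
  obtain S where S: "psd S \<and> S ** S = adj M ** M"
    using eigenbasis_psd_sqrt[OF V lam] lam_sq by auto
  show ?thesis
  proof (rule ex1I[of _ S])
    fix S' assume S': "psd S' \<and> S' ** S' = adj M ** M"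
    show "S' = S"
    proof (rule onb_matrix_eq[OF V])
      fix v assume "v \<in> V"
      thus "S' *v v = S *v v"
        using psd_sqrt_eigenvector[of S' _ v "lam v"] psd_sqrt_eigenvector[of S _ v "lam v"] S S' lam
        by simp
    qed
  qed (rule S)
qed

lemma nuclear_norm_eigenbasis:
  fixes M :: "complex^'n^'m"
  assumes V: "onb V" and lam: "\<forall>v\<in>V. (adj M ** M) *v v = complex_of_real (lam v) *s v"
  shows "nuclear_norm M = (\<Sum>v\<in>V. norm (M *v v))"
proof -
  have unit: "cinner v v = 1" if "v \<in> V" for v using V that by (simp add: onb_def orthonormal_def)
  define S where "S = (THE S. psd S \<and> S ** S = adj M ** M)"
  have S: "psd S \<and> S ** S = adj M ** M"
    unfolding S_def by (rule theI'[OF gram_psd_sqrt_unique])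
  have "cinner v (S *v v) = complex_of_real (norm (M *v v))" if v: "v \<in> V" for v
    using psd_sqrt_eigenvector[of S _ v "lam v"] S lam gram_eigenvalue[of M v "lam v"] v unit[OF v]
    by (simp add: cinner_scale_right)
  hence "trace S = (\<Sum>v\<in>V. complex_of_real (norm (M *v v)))"
    by (simp add: onb_trace[OF V])
  thus ?thesis by (simp add: nuclear_norm_def flip: S_def)
qed


section \<open>The squared Frobenius norm\<close>

definition frob_sq :: "complex^'a^'b \<Rightarrow> real" where
  "frob_sq X = (\<Sum>i\<in>UNIV. \<Sum>j\<in>UNIV. (cmod (X$i$j))\<^sup>2)"

lemma frob_sq_nonneg: "0 \<le> frob_sq X"
  by (simp add: frob_sq_def sum_nonneg)

lemma frob_sq_trace: "Re (trace (adj X ** X)) = frob_sq X"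
proof -
  have "trace (adj X ** X) = (\<Sum>j\<in>UNIV. \<Sum>i\<in>UNIV. complex_of_real ((cmod (X$i$j))\<^sup>2))"
    by (simp add: trace_def matrix_matrix_mult_def adj_def cnj_mult_self)
  hence "Re (trace (adj X ** X)) = (\<Sum>j\<in>UNIV. \<Sum>i\<in>UNIV. (cmod (X$i$j))\<^sup>2)"
    by simp
  also have "\<dots> = frob_sq X" unfolding frob_sq_def by (rule sum.swap)
  finally show ?thesis .
qed

text \<open>Parseval applied to the rows: the squared Frobenius norm is the sum of the squared
  norms of the images of any orthonormal basis.\<close>
lemma frob_sq_onb:
  fixes B :: "complex^'k^'m"
  assumes "onb V"
  shows "(\<Sum>v\<in>V. (norm (B *v v))\<^sup>2) = frob_sq B"
proof -
  define r where "r i = (\<chi> j. cnj (B$i$j))" for i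
  have Bv: "(B *v v)$i = cinner (r i) v" for v i
    by (simp add: r_def cinner_def matrix_vector_mult_def)
  have "(\<Sum>v\<in>V. (norm (B *v v))\<^sup>2) = (\<Sum>i\<in>UNIV. \<Sum>v\<in>V. (cmod (cinner v (r i)))\<^sup>2)"
    by (simp add: norm_sq_sum Bv cmod_cinner_commute sum.swap[of _ V])
  also have "\<dots> = (\<Sum>i\<in>UNIV. (norm (r i))\<^sup>2)" by (simp add: parseval[OF assms])
  also have "\<dots> = frob_sq B" by (simp add: norm_sq_sum r_def frob_sq_def)
  finally show ?thesis .
qed

text \<open>Bessel applied to the columns: images under adj A of an orthonormal family (up to zero
  vectors) have total squared norm at most the squared Frobenius norm of A.\<close>
lemma frob_sq_adj_bessel:
  fixes A :: "complex^'k^'p" and w :: "'v \<Rightarrow> complex^'p"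
  assumes fin: "finite V"
    and orth: "\<And>a b. a \<in> V \<Longrightarrow> b \<in> V \<Longrightarrow> a \<noteq> b \<Longrightarrow> cinner (w a) (w b) = 0"
    and unit: "\<And>a. a \<in> V \<Longrightarrow> w a = 0 \<or> cinner (w a) (w a) = 1"
  shows "(\<Sum>v\<in>V. (norm (adj A *v w v))\<^sup>2) \<le> frob_sq A"
proof -
  define c where "c k = (\<chi> i. A$i$k)" for k
  have Aw: "(adj A *v x)$k = cinner (c k) x" for x k
    by (simp add: c_def cinner_def matrix_vector_mult_def adj_def)
  have "(\<Sum>v\<in>V. (norm (adj A *v w v))\<^sup>2) = (\<Sum>k\<in>UNIV. \<Sum>v\<in>V. (cmod (cinner (w v) (c k)))\<^sup>2)"
    by (simp add: norm_sq_sum Aw cmod_cinner_commute sum.swap[of _ V])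
  also have "\<dots> \<le> (\<Sum>k\<in>UNIV. (norm (c k))\<^sup>2)"
    by (rule sum_mono) (rule bessel[OF fin orth unit])
  also have "\<dots> = frob_sq A"
    by (simp add: norm_sq_sum c_def frob_sq_def sum.swap[of _ "UNIV::'k set"])
  finally show ?thesis .
qed


section \<open>The nuclear norm of a product\<close>

lemma gram_eigenbasis_images_orthogonal:
  assumes V: "orthonormal V" and lam: "\<forall>v\<in>V. (adj M ** M) *v v = complex_of_real (lam v) *s v"
    and "a \<in> V" "b \<in> V" "a \<noteq> b"
  shows "cinner (M *v a) (M *v b) = 0"
proof -
  have "cinner (M *v a) (M *v b) = cinner a ((adj M ** M) *v b)"
    using cinner_adj[of a "adj M" "M *v b"] by (simp add: matrix_vector_mul_assoc)
  thus ?thesis using assms by (simp add: cinner_scale_right orthonormal_def)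
qed

text \<open>With v ranging over a Gram eigenbasis of A B and w v the normalised image,
  |A B v| = <adj A w v, B v> <= |adj A w v| |B v|; sum, apply Cauchy-Schwarz, and bound the
  two factors by Bessel and Parseval.\<close>
lemma nuclear_norm_mult_le:
  fixes A :: "complex^'k^'p" and B :: "complex^'m^'k"
  shows "nuclear_norm (A ** B) \<le> sqrt (frob_sq A) * sqrt (frob_sq B)"
proof -
  define M where "M = A ** B"
  obtain V lam where V: "onb V" and lam: "\<forall>v\<in>V. (adj M ** M) *v v = complex_of_real (lam v) *s v"
    using gram_eigenbasis by blast
  have onV: "orthonormal V" using V by (simp add: onb_def)
  define w where "w v = complex_of_real (1 / norm (M *v v)) *s (M *v v)" for v
  have w_orth: "cinner (w a) (w b) = 0" if "a \<in> V" "b \<in> V" "a \<noteq> b" for a b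
    using gram_eigenbasis_images_orthogonal[OF onV lam that]
    by (simp add: w_def cinner_scale_left cinner_scale_right)
  have w_unit: "w a = 0 \<or> cinner (w a) (w a) = 1" for a
  proof (cases "M *v a = 0")
    case False
    define n where "n = norm (M *v a)"
    have "cinner (w a) (w a)
        = complex_of_real (1 / n) * (cnj (complex_of_real (1 / n)) * cinner (M *v a) (M *v a))"
      by (simp only: w_def n_def cinner_scale_left cinner_scale_right)
    also have "\<dots> = complex_of_real (1 / n * (1 / n * n\<^sup>2))" by (simp add: cinner_self n_def)
    also have "\<dots> = 1" using False by (simp add: power2_eq_square n_def)
    finally show ?thesis by simp
  qed (simp add: w_def)
  have pointwise: "norm (M *v v) \<le> norm (adj A *v w v) * norm (B *v v)" for v
  proof (cases "M *v v = 0")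
    case False
    have "complex_of_real (norm (M *v v)) = cinner (w v) (M *v v)"
      using False by (simp add: w_def cinner_scale_left cinner_self power2_eq_square)
    also have "\<dots> = cinner (adj A *v w v) (B *v v)"
      by (simp add: M_def cinner_adj flip: matrix_vector_mul_assoc)
    finally have "norm (M *v v) = inner (adj A *v w v) (B *v v)"
      unfolding inner_cinner by (metis Re_complex_of_real)
    also have "\<dots> \<le> norm (adj A *v w v) * norm (B *v v)" by (rule norm_cauchy_schwarz)
    finally show ?thesis .
  qed simp
  have "nuclear_norm M \<le> (\<Sum>v\<in>V. norm (adj A *v w v) * norm (B *v v))"
    unfolding nuclear_norm_eigenbasis[OF V lam] by (rule sum_mono) (rule pointwise)
  also have "\<dots> \<le> L2_set (\<lambda>v. norm (adj A *v w v)) V * L2_set (\<lambda>v. norm (B *v v)) V"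
    using L2_set_mult_ineq[where f = "\<lambda>v. norm (adj A *v w v)" and g = "\<lambda>v. norm (B *v v)" and A = V] by simp
  also have "\<dots> \<le> sqrt (frob_sq A) * sqrt (frob_sq B)"
    unfolding L2_set_def frob_sq_onb[OF V]
    using frob_sq_adj_bessel[of V w A] onV w_orth w_unit
    by (intro mult_right_mono) (auto simp: orthonormal_def frob_sq_nonneg)
  finally show ?thesis by (simp add: M_def)
qed


section \<open>Integration over the frequency range\<close>

lemma borel_measurable_sqrt_frob_sq_mult:
  fixes X :: "real \<Rightarrow> complex^'k^'p" and Y :: "real \<Rightarrow> complex^'m^'k"
  assumes X: "X \<in> borel_measurable lborel" and Y: "Y \<in> borel_measurable lborel"
  shows "(\<lambda>\<omega>. sqrt (frob_sq (X \<omega> ** Y \<omega>))) \<in> borel_measurable lborel"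
proof -
  have "continuous_on UNIV (\<lambda>p::(complex^'k^'p) \<times> (complex^'m^'k). sqrt (frob_sq (fst p ** snd p)))"
    unfolding frob_sq_def matrix_matrix_mult_def by (simp, intro continuous_intros)
  from borel_measurable_continuous_on[OF this borel_measurable_Pair[OF X Y]] show ?thesis
    by simp
qed

lemma h2sq_frob_sq: "h2sq X = ennreal (1 / (2 * pi)) * (\<integral>\<^sup>+ \<omega>\<in>{-pi..pi}. ennreal (frob_sq (X \<omega>)) \<partial>lborel)"
  by (simp add: h2sq_def frob_sq_trace)

lemma integral_nuclear_norm_bound:
  fixes F :: "real \<Rightarrow> complex^'m^'p" and G L :: "real \<Rightarrow> complex^'m^'m" and K :: "complex^'n^'m"
  assumes F: "F \<in> borel_measurable lborel" and G: "G \<in> borel_measurable lborel"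
    and L: "L \<in> borel_measurable lborel" and I: "I \<in> sets lborel"
    and LG: "AE \<omega> in lborel. \<omega> \<in> I \<longrightarrow> L \<omega> ** G \<omega> = mat 1"
  shows "(\<integral>\<^sup>+ \<omega>\<in>I. ennreal (nuclear_norm (F \<omega> ** K)) \<partial>lborel)\<^sup>2
    \<le> (\<integral>\<^sup>+ \<omega>\<in>I. ennreal (frob_sq (F \<omega> ** L \<omega>)) \<partial>lborel)
      * (\<integral>\<^sup>+ \<omega>\<in>I. ennreal (frob_sq (G \<omega> ** K)) \<partial>lborel)"
proof -
  define f where "f \<omega> = ennreal (sqrt (frob_sq (F \<omega> ** L \<omega>))) * indicator I \<omega>" for \<omega>
  define g where "g \<omega> = ennreal (sqrt (frob_sq (G \<omega> ** K))) * indicator I \<omega>" for \<omega>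
  have f_meas: "f \<in> borel_measurable lborel"
    unfolding f_def using borel_measurable_sqrt_frob_sq_mult[OF F L] I by measurable
  have g_meas: "g \<in> borel_measurable lborel"
    unfolding g_def using borel_measurable_sqrt_frob_sq_mult[OF G, of "\<lambda>_. K"] I by measurable
  have bound: "ennreal (nuclear_norm (F \<omega> ** K)) * indicator I \<omega> \<le> f \<omega> * g \<omega>"
    if "\<omega> \<in> I \<longrightarrow> L \<omega> ** G \<omega> = mat 1" for \<omega>
  proof (cases "\<omega> \<in> I")
    case True
    hence "F \<omega> ** K = F \<omega> ** (L \<omega> ** G \<omega>) ** K" using that by simp
    also have "\<dots> = (F \<omega> ** L \<omega>) ** (G \<omega> ** K)" by (simp add: matrix_mul_assoc)
    finally have "nuclear_norm (F \<omega> ** K) \<le> sqrt (frob_sq (F \<omega> ** L \<omega>)) * sqrt (frob_sq (G \<omega> ** K))"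
      using nuclear_norm_mult_le by metis
    thus ?thesis using True by (simp add: f_def g_def frob_sq_nonneg ennreal_leI flip: ennreal_mult)
  qed simp
  have "(\<integral>\<^sup>+ \<omega>\<in>I. ennreal (nuclear_norm (F \<omega> ** K)) \<partial>lborel) \<le> (\<integral>\<^sup>+ \<omega>. f \<omega> * g \<omega> \<partial>lborel)"
    using LG bound by (intro nn_integral_mono_AE) auto
  hence "(\<integral>\<^sup>+ \<omega>\<in>I. ennreal (nuclear_norm (F \<omega> ** K)) \<partial>lborel)\<^sup>2 \<le> (\<integral>\<^sup>+ \<omega>. f \<omega> * g \<omega> \<partial>lborel)\<^sup>2"
    by (simp add: power_mono)
  also have "\<dots> \<le> (\<integral>\<^sup>+ \<omega>. f \<omega> ^ 2 \<partial>lborel) * (\<integral>\<^sup>+ \<omega>. g \<omega> ^ 2 \<partial>lborel)"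
    by (rule Cauchy_Schwarz_nn_integral[OF f_meas g_meas])
  also have "\<dots> = (\<integral>\<^sup>+ \<omega>\<in>I. ennreal (frob_sq (F \<omega> ** L \<omega>)) \<partial>lborel)
      * (\<integral>\<^sup>+ \<omega>\<in>I. ennreal (frob_sq (G \<omega> ** K)) \<partial>lborel)"
    unfolding f_def g_def
    by (intro arg_cong2[where f = "(*)"] nn_integral_cong)
      (auto simp: indicator_def frob_sq_nonneg ennreal_power)
  finally show ?thesis .
qed

theorem theorem8:
  fixes F :: "real \<Rightarrow> complex^'m^'p"
    and G L :: "real \<Rightarrow> complex^'m^'m"
    and k :: "real^'m"
    and \<epsilon> \<delta> :: real
  assumes F_meas: "F \<in> borel_measurable lborel"
    and F_fin: "h2sq F < \<infinity>"
    and k_pos: "\<forall>i. k $ i > 0"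
    and eps: "\<epsilon> > 0" and del: "\<delta> > 0"
    and G_meas: "G \<in> borel_measurable lborel"
    and G_stable: "bounded (G ` {-pi..pi})"
    and L_meas: "L \<in> borel_measurable lborel"
    and LG: "AE \<omega> in lborel. \<omega> \<in> {-pi..pi} \<longrightarrow> L \<omega> ** G \<omega> = mat 1"
  shows "ennreal ((kappa \<delta> \<epsilon>)\<^sup>2) * h2sq (\<lambda>\<omega>. G \<omega> ** diagm k) * h2sq (\<lambda>\<omega>. F \<omega> ** L \<omega>)
     \<ge> ennreal ((kappa \<delta> \<epsilon>)\<^sup>2) *
        (ennreal (1 / (2 * pi)) * (\<integral>\<^sup>+ \<omega>\<in>{-pi..pi}. ennreal (nuclear_norm (F \<omega> ** diagm k)) \<partial>lborel))\<^sup>2"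
proof -
  define c where "c = ennreal (1 / (2 * pi))"
  define N where "N = (\<integral>\<^sup>+ \<omega>\<in>{-pi..pi}. ennreal (nuclear_norm (F \<omega> ** diagm k)) \<partial>lborel)"
  define PF where "PF = (\<integral>\<^sup>+ \<omega>\<in>{-pi..pi}. ennreal (frob_sq (F \<omega> ** L \<omega>)) \<partial>lborel)"
  define PG where "PG = (\<integral>\<^sup>+ \<omega>\<in>{-pi..pi}. ennreal (frob_sq (G \<omega> ** diagm k)) \<partial>lborel)"
  have "N\<^sup>2 \<le> PF * PG"
    unfolding N_def PF_def PG_def
    using integral_nuclear_norm_bound[OF F_meas G_meas L_meas _ LG] by simp
  hence "c\<^sup>2 * N\<^sup>2 \<le> c\<^sup>2 * (PF * PG)" by (rule mult_left_mono) simp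
  hence "(c * N)\<^sup>2 \<le> (c * PG) * (c * PF)"
    by (simp add: power_mult_distrib power2_eq_square mult_ac)
  hence "ennreal ((kappa \<delta> \<epsilon>)\<^sup>2) * (c * N)\<^sup>2 \<le> ennreal ((kappa \<delta> \<epsilon>)\<^sup>2) * ((c * PG) * (c * PF))"
    by (rule mult_left_mono) simp
  thus ?thesis by (simp add: h2sq_frob_sq c_def N_def PF_def PG_def mult.assoc)
qed

end
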